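(* Run the UCB-like policy described in the context, with switch budget $L$ (so that $q=q(L,K)=\lfloor (L-N)/(K+1)\rfloor\ge 1$). Then the number of assortment switches $\Psi_T=\sum_{t}\mathbb{I}[S_t\neq S_{t+1}]$ made by the policy is at most $L$.
   Context: Setting: $N$ products $\mathcal N=\{1,\dots,N\}$, a no-purchase option $0$, $K$ resources $\mathcal K=\{1,\dots,K\}$, horizon of $T$ periods. Product $i$ gives revenue $r(i)\in[0,1]$ and consumes $a(i,k)\in[0,1]$ units of resource $k$; $r(0)=a(0,k)=0$. Resource $k$ has initial inventory $Tc(k)$, $c(k)>0$. For $v\in\mathbb R_{>0}^N$ and $S\subseteq\mathcal N$ the MNL probabilities are $\varphi(i,S\mid v)=v_i/(1+\sum_{j\in S}v_j)$ for $i\in S$, $\varphi(0,S\mid v)=1/(1+\sum_{j\in S}v_j)$, $\varphi(i,S\mid v)=0$ for $i\in\mathcal N\setminus S$. The unknown true vector $v^*$ satisfies $v_i^*\in[1/R,R]$. In period $t$ the retailer offers $S_t\subseteq\mathcal N$ and the customer chooses $I_t\in S_t\cup\{0\}$ with conditional probability $\varphi(I_t,S_t\mid v^* )$ given the past. UCB-like policy: parameters $\tau$ (a multiple of $N$), $L$, $\delta\in(0,1)$, $q=\lfloor (L-N)/(K+1)\rfloor$; $\Psi=\frac{R(1+NR)^2}{2}\sqrt{2+4\log\frac{2T^{1/2}q(K+1)N}{\delta}}$, $\varepsilon(n)=(\sqrt N+1)\Psi/\sqrt n$, $\omega=\frac{1}{T\min_k c(k)}\Big(4(\sqrt N+1)\sqrt{1+\frac{NT}{\tau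 q}}\Psi\sqrt{N^2T}+\sqrt{2T\log\frac{4(K+1)}{\delta}}+\frac{2N^2\Psi}{\sqrt\tau}\sqrt{2T\log\frac{4(K+1)}{\delta}}+\tau\Big)$. Warm start: for $i=1,\dots,N$ offer $S_t=\{i\}$ for $t=(i-1)\tau/N+1,\dots,i\tau/N$. Let $T_0=\tau$, $T_\ell=\ell\lfloor (T-\tau)/q\rfloor+\tau$ for $\ell=1,\dots,q$. In epoch $\ell$: let $n_i^{\ell-1}=\sum_{t=1}^{T_{\ell-1}}\mathbb I(i\in S_t)$; compute the MLE $\hat v^\ell=e^{\hat\theta}$, $\hat\theta$ minimizing $\mathcal L_{\ell-1}(\theta)=-\sum_{t=1}^{T_{\ell-1}}\big[\theta_{I_t}-\log(1+\sum_{i\in S_t}e^{\theta_i})\big]$ ($\theta_0:=0$); solve the UCB-LP: maximize $\sum_{S\subseteq\mathcal N}\sum_{i\in S}r(i)\big(\varphi(i,S\mid\hat v^\ell)+\varepsilon(n_i^{\ell-1})\big)y(S)$ subject to $\sum_{S}\sum_{i\in S}a(i,k)\big(\varphi(i,S\mid\hat v^\ell)-\varepsilon(n_i^{\ell-1})\big)y(S)\le(1-\omega)c(k)$ for all $k$, $\sum_S y(S)=1$, $y\ge 0$, obtaining a basic optimal solution $y_\ell$ (at most $K+1$ nonzero entries); draw an assortment independently from $y_\ell$ for each period $T_{\ell-1}+1,\dots,T_\ell$, let $N_\ell(S)$ be the number of draws equal to $S$, and offer each $S$ with $N_\ell(S)>0$ for $N_\ell(S)$ consecutive periods, updating inventories;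 stop once a resource is exhausted. *)

theory Defs
  imports Complex_Main
begin

text \<open>MNL choice probability phi(i, S | v); index 0 is the no-purchase option.\<close>
definition mnl_prob :: "(nat \<Rightarrow> real) \<Rightarrow> nat set \<Rightarrow> nat \<Rightarrow> real" where
  "mnl_prob v S i =
     (if i = 0 then 1 / (1 + (\<Sum>j\<in>S. v j))
      else if i \<in> S then v i / (1 + (\<Sum>j\<in>S. v j)) else 0)"

definition q_par :: "nat \<Rightarrow> nat \<Rightarrow> nat \<Rightarrow> nat" where
  "q_par L N K = (L - N) div (K + 1)"

definition Psi_par :: "nat \<Rightarrow> nat \<Rightarrow> nat \<Rightarrow> nat \<Rightarrow> real \<Rightarrow> real \<Rightarrow> real" where
  "Psi_par N K T q R \<delta> =
     R * (1 + real N * R)^2 / 2 *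
     sqrt (2 + 4 * ln (2 * sqrt (real T) * real q * real (K + 1) * real N / \<delta>))"

definition eps_par :: "nat \<Rightarrow> real \<Rightarrow> nat \<Rightarrow> real" where
  "eps_par N Psi n = (sqrt (real N) + 1) * Psi / sqrt (real n)"

definition omega_par ::
  "nat \<Rightarrow> nat \<Rightarrow> nat \<Rightarrow> nat \<Rightarrow> nat \<Rightarrow> (nat \<Rightarrow> real) \<Rightarrow> real \<Rightarrow> real \<Rightarrow> real" where
  "omega_par N K T \<tau> q c Psi \<delta> =
     1 / (real T * Min (c ` {1..K})) *
     ( 4 * (sqrt (real N) + 1) * sqrt (1 + real N * real T / (real \<tau> * real q)) * Psi
         * sqrt ((real N)^2 * real T)
     + sqrt (2 * real T * ln (4 * real (K + 1) / \<delta>))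
     + 2 * (real N)^2 * Psi / sqrt (real \<tau>) * sqrt (2 * real T * ln (4 * real (K + 1) / \<delta>))
     + real \<tau>)"

definition epoch_end :: "nat \<Rightarrow> nat \<Rightarrow> nat \<Rightarrow> nat \<Rightarrow> nat" where
  "epoch_end T \<tau> q l = l * ((T - \<tau>) div q) + \<tau>"

definition neg_loglik :: "(nat \<Rightarrow> nat set) \<Rightarrow> (nat \<Rightarrow> nat) \<Rightarrow> nat \<Rightarrow> (nat \<Rightarrow> real) \<Rightarrow> real" where
  "neg_loglik S I m \<theta> =
     - (\<Sum>t\<in>{1..m}. (\<theta>(0 := 0)) (I t) - ln (1 + (\<Sum>i\<in>S t. exp (\<theta> i))))"

definition offer_count :: "(nat \<Rightarrow> nat set) \<Rightarrow> nat \<Rightarrow> nat \<Rightarrow> nat" where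
  "offer_count S m i = card {t \<in> {1..m}. i \<in> S t}"

definition ucb_obj ::
  "nat \<Rightarrow> (nat \<Rightarrow> real) \<Rightarrow> (nat \<Rightarrow> real) \<Rightarrow> (nat \<Rightarrow> real) \<Rightarrow> (nat set \<Rightarrow> real) \<Rightarrow> real" where
  "ucb_obj N r v e y =
     (\<Sum>A\<in>Pow {1..N}. (\<Sum>i\<in>A. r i * (mnl_prob v A i + e i)) * y A)"

definition ucb_lhs ::
  "nat \<Rightarrow> (nat \<Rightarrow> nat \<Rightarrow> real) \<Rightarrow> nat \<Rightarrow> (nat \<Rightarrow> real) \<Rightarrow> (nat \<Rightarrow> real) \<Rightarrow> (nat set \<Rightarrow> real) \<Rightarrow> real" where
  "ucb_lhs N a k v e y =
     (\<Sum>A\<in>Pow {1..N}. (\<Sum>i\<in>A. a i k * (mnl_prob v A i - e i)) * y A)"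

definition ucb_feasible ::
  "nat \<Rightarrow> nat \<Rightarrow> (nat \<Rightarrow> nat \<Rightarrow> real) \<Rightarrow> (nat \<Rightarrow> real) \<Rightarrow> real
     \<Rightarrow> (nat \<Rightarrow> real) \<Rightarrow> (nat \<Rightarrow> real) \<Rightarrow> (nat set \<Rightarrow> real) \<Rightarrow> bool" where
  "ucb_feasible N K a c \<omega> v e y \<longleftrightarrow>
     (\<forall>A. 0 \<le> y A) \<and> (\<forall>A. A \<notin> Pow {1..N} \<longrightarrow> y A = 0) \<and>
     (\<Sum>A\<in>Pow {1..N}. y A) = 1 \<and>
     (\<forall>k\<in>{1..K}. ucb_lhs N a k v e y \<le> (1 - \<omega>) * c k)"

text \<open>A basic optimal solution of the UCB-LP (rendered as: optimal with at most K+1 nonzero entries).\<close>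
definition ucb_basic_opt ::
  "nat \<Rightarrow> nat \<Rightarrow> (nat \<Rightarrow> real) \<Rightarrow> (nat \<Rightarrow> nat \<Rightarrow> real) \<Rightarrow> (nat \<Rightarrow> real) \<Rightarrow> real
     \<Rightarrow> (nat \<Rightarrow> real) \<Rightarrow> (nat \<Rightarrow> real) \<Rightarrow> (nat set \<Rightarrow> real) \<Rightarrow> bool" where
  "ucb_basic_opt N K r a c \<omega> v e y \<longleftrightarrow>
     ucb_feasible N K a c \<omega> v e y \<and>
     (\<forall>y'. ucb_feasible N K a c \<omega> v e y' \<longrightarrow> ucb_obj N r v e y' \<le> ucb_obj N r v e y) \<and>
     card {A \<in> Pow {1..N}. y A \<noteq> 0} \<le> K + 1"

definition exhausted_before ::
  "nat \<Rightarrow> nat \<Rightarrow> (nat \<Rightarrow> nat \<Rightarrow> real) \<Rightarrow> (nat \<Rightarrow> real) \<Rightarrow> (nat \<Rightarrow> nat) \<Rightarrow> nat \<Rightarrow> bool" where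
  "exhausted_before K T a c I t \<longleftrightarrow>
     (\<exists>k\<in>{1..K}. (\<Sum>s\<in>{1..<t}. a (I s) k) \<ge> real T * c k)"

definition num_switches :: "nat \<Rightarrow> (nat \<Rightarrow> nat set) \<Rightarrow> nat" where
  "num_switches T S = card {t \<in> {1..<T}. S t \<noteq> S (Suc t)}"

end

theory Submission
  imports Defs
begin

text \<open>Only the switching structure of the policy matters, not the estimates or the LP values.
  Split the switches t (with S t \<noteq> S (t+1)) by what happens at t+1: the policy may stop
  (once, since stopping is permanent); it may move to the next warm-start slot (at most N - 1
  times); it may start an epoch (at most q times); or it may stay inside an epoch l.  Inside an
  epoch every assortment is offered in one block and is drawn from the support of a basic
  solution y_l, which has at most K + 1 elements, so there are at most K switches inside it.
  Altogether 1 + (N - 1) + q + q K \<le> L.\<close>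

lemma ex_interval_containing:
  fixes f :: "nat \<Rightarrow> nat"
  assumes "f 0 < s" and "s \<le> f q"
  shows "\<exists>l\<in>{1..q}. f (l - 1) < s \<and> s \<le> f l"
  using assms
proof (induction q)
  case 0
  then show ?case by simp
next
  case (Suc q)
  show ?case
  proof (cases "s \<le> f q")
    case True
    with Suc obtain l where "l \<in> {1..q}" "f (l - 1) < s \<and> s \<le> f l" by blast
    then show ?thesis by force
  next
    case False
    with Suc.prems show ?thesis by force
  qed
qed

lemma card_exits_le_1:
  assumes down: "\<And>s t. s \<le> t \<Longrightarrow> P t \<Longrightarrow> P s"
  shows "card {t. P t \<and> \<not> P (Suc t)} \<le> 1"
proof (cases "finite {t. P t \<and> \<not> P (Suc t)}")
  case True
  have "s = t" if "P s" "\<not> P (Suc s)" "P t" "\<not> P (Suc t)" for s t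
    using that down[of "Suc s" t] down[of "Suc t" s] by (force simp: not_less_eq_eq)
  with True show ?thesis by (auto simp: card_le_Suc0_iff_eq)
qed simp

text \<open>A switch inside a slot is impossible, so every switch sits at a slot boundary i d with
  1 \<le> i < N.\<close>

lemma card_switches_within_slots_le:
  fixes S f :: "nat \<Rightarrow> 'a"
  assumes down: "\<And>s t. s \<le> t \<Longrightarrow> P t \<Longrightarrow> P s"
    and slot: "\<And>i t. i \<in> {1..N} \<Longrightarrow> (i - 1) * d < t \<Longrightarrow> t \<le> i * d \<Longrightarrow> P t \<Longrightarrow> S t = f i"
  shows "card {t. 0 < t \<and> Suc t \<le> N * d \<and> P (Suc t) \<and> S t \<noteq> S (Suc t)} \<le> N - 1"
    (is "card ?W \<le> _")
proof -
  have "?W \<subseteq> (\<lambda>i. i * d) ` {1..<N}"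
  proof
    fix t
    assume "t \<in> ?W"
    then have t: "0 < t" "Suc t \<le> N * d" "P (Suc t)" "S t \<noteq> S (Suc t)" by auto
    obtain i where i: "i \<in> {1..N}" "(i - 1) * d < t" "t \<le> i * d"
      using ex_interval_containing[of "\<lambda>i. i * d" t N] t by auto
    have "t = i * d"
    proof (rule ccontr)
      assume "t \<noteq> i * d"
      then have "S t = f i" "S (Suc t) = f i"
        using slot[OF i(1)] i t down[of t "Suc t"] by auto
      with t(4) show False by simp
    qed
    moreover have "i < N"
      using t(2) \<open>t = i * d\<close> by (metis Suc_le_lessD mult_less_cancel2)
    ultimately show "t \<in> (\<lambda>i. i * d) ` {1..<N}" using i by auto
  qed
  then have "card ?W \<le> card ((\<lambda>i. i * d) ` {1..<N})" by (rule card_mono[rotated]) simp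
  also have "\<dots> \<le> N - 1" using card_image_le[of "{1..<N}" "\<lambda>i. i * d"] by simp
  finally show ?thesis .
qed

text \<open>If within (b, e] every assortment is offered in one block and lies in F, then
  t \<mapsto> S (t + 1) maps the switches injectively into F - {S (b + 1)}.\<close>

lemma card_switches_within_blocks_le:
  fixes S :: "nat \<Rightarrow> 'a"
  assumes "finite F"
    and down: "\<And>s t. s \<le> t \<Longrightarrow> P t \<Longrightarrow> P s"
    and in_F: "\<And>t. b < t \<Longrightarrow> t \<le> e \<Longrightarrow> P t \<Longrightarrow> S t \<in> F"
    and blocks: "\<And>t1 t2 t3. b < t1 \<Longrightarrow> t1 < t2 \<Longrightarrow> t2 < t3 \<Longrightarrow> t3 \<le> e \<Longrightarrow> P t3 \<Longrightarrow>
                   S t1 = S t3 \<Longrightarrow> S t2 = S t1"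
  shows "card {t. b < t \<and> t < e \<and> P (Suc t) \<and> S t \<noteq> S (Suc t)} \<le> card F - 1"
    (is "card ?W \<le> _")
proof (cases "?W = {}")
  case False
  then obtain t0 where "t0 \<in> ?W" by blast
  then have first: "S (Suc b) \<in> F" using in_F down[of "Suc b" "Suc t0"] by auto
  have same_block: "S t = S (Suc t)"
    if "b < s" "s \<le> t" "Suc t \<le> e" "P (Suc t)" "S s = S (Suc t)" for s t
  proof (cases "s = t")
    case False
    with that blocks[of s t "Suc t"] show ?thesis by auto
  qed (use that in simp)
  have no_repeat: "S (Suc t) \<noteq> S (Suc t')" if "t \<in> ?W" "t' \<in> ?W" "t < t'" for t t'
    using that same_block[of "Suc t" t'] by auto
  have "inj_on (\<lambda>t. S (Suc t)) ?W"
  proof (rule inj_onI)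
    fix t t'
    assume "t \<in> ?W" "t' \<in> ?W" "S (Suc t) = S (Suc t')"
    with no_repeat[of t t'] no_repeat[of t' t] show "t = t'"
      by (cases t t' rule: linorder_cases) auto
  qed
  moreover have "(\<lambda>t. S (Suc t)) ` ?W \<subseteq> F - {S (Suc b)}"
    using in_F same_block[of "Suc b"] by (force simp: Suc_le_eq)
  ultimately have "card ?W \<le> card (F - {S (Suc b)})"
    using \<open>finite F\<close> card_inj_on_le by blast
  with first \<open>finite F\<close> show ?thesis by simp
qed (simp only: card.empty le0)

lemma exhausted_before_mono:
  assumes "u \<le> v"
    and nonneg: "\<And>s k. 1 \<le> s \<Longrightarrow> s < v \<Longrightarrow> k \<in> {1..K} \<Longrightarrow> 0 \<le> a (I s) k"
    and "exhausted_before K T a c I u"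
  shows "exhausted_before K T a c I v"
proof -
  from assms(3) obtain k where k: "k \<in> {1..K}"
    and used_up: "real T * c k \<le> (\<Sum>s\<in>{1..<u}. a (I s) k)"
    unfolding exhausted_before_def by blast
  have "(\<Sum>s\<in>{1..<u}. a (I s) k) \<le> (\<Sum>s\<in>{1..<v}. a (I s) k)"
    by (rule sum_mono2) (use \<open>u \<le> v\<close> nonneg k in auto)
  with k used_up show ?thesis unfolding exhausted_before_def by force
qed

lemma ucb_basic_opt_support:
  assumes "ucb_basic_opt N K r a c \<omega> v e y"
  shows "{A. 0 < y A} \<subseteq> Pow {1..N}" and "card {A. 0 < y A} \<le> K + 1"
proof -
  from assms have "{A. 0 < y A} = {A \<in> Pow {1..N}. y A \<noteq> 0}"
    unfolding ucb_basic_opt_def ucb_feasible_def by (force simp: less_le)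
  with assms show "{A. 0 < y A} \<subseteq> Pow {1..N}" and "card {A. 0 < y A} \<le> K + 1"
    unfolding ucb_basic_opt_def by auto
qed

text \<open>The properties of a run of the policy that the switch count depends on: d = \<tau>/N is
  the length of a warm-start slot, E l = T_l the last period of epoch l, and y l the LP
  solution of epoch l.\<close>

locale epoch_schedule =
  fixes N K T d q :: nat and E :: "nat \<Rightarrow> nat"
    and a :: "nat \<Rightarrow> nat \<Rightarrow> real" and c :: "nat \<Rightarrow> real"
    and S :: "nat \<Rightarrow> nat set" and I :: "nat \<Rightarrow> nat" and y :: "nat \<Rightarrow> nat set \<Rightarrow> real"
  assumes N_pos: "1 \<le> N"
    and E_0: "E 0 = N * d"
    and a_nonneg: "\<And>i k. i \<in> {1..N} \<Longrightarrow> k \<in> {1..K} \<Longrightarrow> 0 \<le> a i k"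
    and a_0: "\<And>k. a 0 k = 0"
    and choice: "\<And>t. t \<in> {1..T} \<Longrightarrow> I t \<in> insert 0 (S t)"
    and stopped: "\<And>t. t \<in> {1..T} \<Longrightarrow> exhausted_before K T a c I t \<or> E q < t \<Longrightarrow> S t = {}"
    and warm: "\<And>i t. i \<in> {1..N} \<Longrightarrow> t \<in> {1..T} \<Longrightarrow> (i - 1) * d < t \<Longrightarrow> t \<le> i * d \<Longrightarrow>
                 \<not> exhausted_before K T a c I t \<Longrightarrow> S t = {i}"
    and support: "\<And>l. l \<in> {1..q} \<Longrightarrow> \<not> exhausted_before K T a c I (Suc (E (l - 1))) \<Longrightarrow>
                 {A. 0 < y l A} \<subseteq> Pow {1..N}"
    and support_card: "\<And>l. l \<in> {1..q} \<Longrightarrow> \<not> exhausted_before K T a c I (Suc (E (l - 1))) \<Longrightarrow>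
                 card {A. 0 < y l A} \<le> K + 1"
    and draws: "\<And>l t. l \<in> {1..q} \<Longrightarrow> t \<in> {1..T} \<Longrightarrow> E (l - 1) < t \<Longrightarrow> t \<le> E l \<Longrightarrow>
                 \<not> exhausted_before K T a c I t \<Longrightarrow> 0 < y l (S t)"
    and blocks: "\<And>l t1 t2 t3. l \<in> {1..q} \<Longrightarrow> E (l - 1) < t1 \<Longrightarrow> t1 < t2 \<Longrightarrow> t2 < t3 \<Longrightarrow>
                 t3 \<le> E l \<Longrightarrow> t3 \<le> T \<Longrightarrow> \<not> exhausted_before K T a c I t3 \<Longrightarrow>
                 S t1 = S t3 \<Longrightarrow> S t2 = S t1"
begin

abbreviation exhausted :: "nat \<Rightarrow> bool" where
  "exhausted \<equiv> exhausted_before K T a c I"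

text \<open>Monotonicity of exhaustion needs nonnegative consumption, which needs choices among the
  products 1..N, which needs offers from the LP support, which is only guaranteed while
  nothing is exhausted: hence the induction over periods.\<close>

lemma offered_subset: "t \<in> {1..T} \<Longrightarrow> S t \<subseteq> {1..N}"
proof (induction t rule: less_induct)
  case (less t)
  have "0 \<le> a (I s) k" if "1 \<le> s" "s < t" "k \<in> {1..K}" for s k
    using less.IH[of s] less.prems choice[of s] that a_0 a_nonneg by fastforce
  then have mono: "exhausted u \<Longrightarrow> u \<le> t \<Longrightarrow> exhausted t" for u
    using exhausted_before_mono by blast
  consider "exhausted t \<or> E q < t" | "\<not> exhausted t" "t \<le> N * d" | "\<not> exhausted t" "E 0 < t" "t \<le> E q"
    using E_0 by fastforce
  then show ?case
  proof cases
    case 1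
    with less.prems stopped show ?thesis by simp
  next
    case 2
    then obtain i where "i \<in> {1..N}" "(i - 1) * d < t" "t \<le> i * d"
      using ex_interval_containing[of "\<lambda>i. i * d" t N] less.prems by auto
    with 2 less.prems warm show ?thesis by simp
  next
    case 3
    then obtain l where l: "l \<in> {1..q}" "E (l - 1) < t" "t \<le> E l"
      using ex_interval_containing[of E t q] by blast
    with 3 mono[of "Suc (E (l - 1))"] have "\<not> exhausted (Suc (E (l - 1)))" by auto
    with l 3 less.prems draws support show ?thesis by blast
  qed
qed

lemma exhausted_mono:
  assumes "u \<le> v" "v \<le> Suc T" "exhausted u"
  shows "exhausted v"
proof (rule exhausted_before_mono[OF assms(1) _ assms(3)])
  fix s k
  assume "1 \<le> s" "s < v" "k \<in> {1..K}"
  with assms(2) choice[of s] offered_subset[of s] a_0 a_nonneg show "0 \<le> a (I s) k"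
    by fastforce
qed

definition running :: "nat \<Rightarrow> bool" where
  "running t \<longleftrightarrow> t \<le> T \<and> t \<le> E q \<and> \<not> exhausted t"

lemma running_downward: "s \<le> t \<Longrightarrow> running t \<Longrightarrow> running s"
  unfolding running_def using exhausted_mono[of s t] by auto

lemma not_running_empty: "t \<in> {1..T} \<Longrightarrow> \<not> running t \<Longrightarrow> S t = {}"
  unfolding running_def using stopped by auto

definition warmup_switches :: "nat set" where
  "warmup_switches = {t. 0 < t \<and> Suc t \<le> N * d \<and> running (Suc t) \<and> S t \<noteq> S (Suc t)}"

definition epoch_switches :: "nat \<Rightarrow> nat set" where
  "epoch_switches l = {t. E (l - 1) < t \<and> t < E l \<and> running (Suc t) \<and> S t \<noteq> S (Suc t)}"

lemma card_warmup_switches_le: "card warmup_switches \<le> N - 1"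
  unfolding warmup_switches_def
proof (rule card_switches_within_slots_le[OF running_downward])
  fix i t
  assume "i \<in> {1..N}" "(i - 1) * d < t" "t \<le> i * d" "running t"
  then show "S t = {i}" using warm unfolding running_def by simp
qed

lemma card_epoch_switches_le:
  assumes l: "l \<in> {1..q}"
  shows "card (epoch_switches l) \<le> K"
proof (cases "epoch_switches l = {}")
  case False
  then obtain t0 where "t0 \<in> epoch_switches l" by blast
  then have "running (Suc (E (l - 1)))"
    using running_downward[of _ "Suc t0"] by (auto simp: epoch_switches_def)
  then have start: "\<not> exhausted (Suc (E (l - 1)))" unfolding running_def by simp
  have "card (epoch_switches l) \<le> card {A. 0 < y l A} - 1"
    unfolding epoch_switches_def
  proof (rule card_switches_within_blocks_le[OF _ running_downward])
    show "finite {A. 0 < y l A}"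
      using support[OF l start] by (rule finite_subset) simp
    show "S t \<in> {A. 0 < y l A}" if "E (l - 1) < t" "t \<le> E l" "running t" for t
      using that draws[OF l] unfolding running_def by simp
    show "S t2 = S t1"
      if "E (l - 1) < t1" "t1 < t2" "t2 < t3" "t3 \<le> E l" "running t3" "S t1 = S t3" for t1 t2 t3
      using that blocks[OF l] unfolding running_def by blast
  qed
  with support_card[OF l start] show ?thesis by simp
qed simp

lemma switches_subset:
  "{t \<in> {1..<T}. S t \<noteq> S (Suc t)} \<subseteq> {t. running t \<and> \<not> running (Suc t)} \<union> warmup_switches
     \<union> E ` {0..<q} \<union> (\<Union>l\<in>{1..q}. epoch_switches l)"
proof
  fix t
  assume t: "t \<in> {t \<in> {1..<T}. S t \<noteq> S (Suc t)}"
  consider "\<not> running (Suc t)" | "running (Suc t)" "Suc t \<le> E 0"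
    | l where "running (Suc t)" "l \<in> {1..q}" "E (l - 1) \<le> t" "t < E l"
    using ex_interval_containing[of E "Suc t" q] by (force simp: running_def not_le)
  then show "t \<in> {t. running t \<and> \<not> running (Suc t)} \<union> warmup_switches
     \<union> E ` {0..<q} \<union> (\<Union>l\<in>{1..q}. epoch_switches l)"
  proof cases
    case 1
    with t not_running_empty[of t] not_running_empty[of "Suc t"] show ?thesis by force
  next
    case 2
    with t E_0 show ?thesis by (simp add: warmup_switches_def)
  next
    case (3 l)
    then consider "t = E (l - 1)" | "t \<in> epoch_switches l"
      using t by (force simp: epoch_switches_def)
    then show ?thesis
    proof cases
      case 1
      with 3 have "t \<in> E ` {0..<q}" by (force intro: image_eqI[where x = "l - 1"])
      then show ?thesis by blast
    qed (use 3 in blast)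
  qed
qed

theorem num_switches_le: "num_switches T S \<le> N + q * (K + 1)"
proof -
  let ?parts = "{t. running t \<and> \<not> running (Suc t)} \<union> warmup_switches
     \<union> E ` {0..<q} \<union> (\<Union>l\<in>{1..q}. epoch_switches l)"
  have "finite ?parts"
    by (rule finite_subset[of _ "{..T} \<union> E ` {0..<q}"])
      (auto simp: warmup_switches_def epoch_switches_def running_def)
  with switches_subset have "num_switches T S \<le> card ?parts"
    unfolding num_switches_def by (rule card_mono[rotated])
  also have "\<dots> \<le> card {t. running t \<and> \<not> running (Suc t)} + card warmup_switches
      + card (E ` {0..<q}) + card (\<Union>l\<in>{1..q}. epoch_switches l)"
    by (meson add_le_mono card_Un_le le_trans order_refl)
  also have "\<dots> \<le> 1 + (N - 1) + q + q * K"
  proof (intro add_le_mono card_warmup_switches_le)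
    show "card {t. running t \<and> \<not> running (Suc t)} \<le> 1"
      by (rule card_exits_le_1[OF running_downward])
    show "card (E ` {0..<q}) \<le> q"
      using card_image_le[of "{0..<q}" E] by simp
    have "card (\<Union>l\<in>{1..q}. epoch_switches l) \<le> (\<Sum>l\<in>{1..q}. card (epoch_switches l))"
      by (rule card_UN_le) simp
    also have "\<dots> \<le> (\<Sum>l\<in>{1..q}. K)"
      by (rule sum_mono) (simp add: card_epoch_switches_le)
    finally show "card (\<Union>l\<in>{1..q}. epoch_switches l) \<le> q * K" by simp
  qed
  finally show ?thesis using N_pos by simp
qed

end

theorem theorem2:
  fixes N K T \<tau> L :: nat
    and r :: "nat \<Rightarrow> real" and a :: "nat \<Rightarrow> nat \<Rightarrow> real" and c :: "nat \<Rightarrow> real"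
    and R \<delta> :: real and vstar :: "nat \<Rightarrow> real"
    and S :: "nat \<Rightarrow> nat set"  (* assortment offered in period t *)
    and I :: "nat \<Rightarrow> nat"        (* customer choice in period t *)
    and \<theta> :: "nat \<Rightarrow> nat \<Rightarrow> real" (* MLE computed at the start of epoch l *)
    and y :: "nat \<Rightarrow> nat set \<Rightarrow> real" (* basic optimal UCB-LP solution of epoch l *)
  assumes N_pos: "N \<ge> 1" and K_pos: "K \<ge> 1"
    and r_range: "\<forall>i\<in>{1..N}. 0 \<le> r i \<and> r i \<le> 1" and r0: "r 0 = 0"
    and a_range: "\<forall>i\<in>{1..N}. \<forall>k\<in>{1..K}. 0 \<le> a i k \<and> a i k \<le> 1"
    and a0: "\<forall>k. a 0 k = 0"
    and c_pos: "\<forall>k\<in>{1..K}. c k > 0"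
    and vstar_range: "\<forall>i\<in>{1..N}. 1 / R \<le> vstar i \<and> vstar i \<le> R"
    and \<delta>_range: "0 < \<delta> \<and> \<delta> < 1"
    and \<tau>_mult: "N dvd \<tau>"
    and q_pos: "q_par L N K \<ge> 1"
    \<comment> \<open>customer choices lie in the offered assortment or are the no-purchase option\<close>
    and choice: "\<forall>t\<in>{1..T}. I t \<in> insert 0 (S t)"
    \<comment> \<open>after a resource is exhausted, or after the last epoch, nothing is offered\<close>
    and stopped: "\<forall>t\<in>{1..T}. (exhausted_before K T a c I t \<or> t > epoch_end T \<tau> (q_par L N K) (q_par L N K))
                     \<longrightarrow> S t = {}"
    \<comment> \<open>warm start\<close>
    and warm: "\<forall>i\<in>{1..N}. \<forall>t\<in>{1..T}. (i - 1) * (\<tau> div N) < t \<and> t \<le> i * (\<tau> div N)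
                     \<and> \<not> exhausted_before K T a c I t \<longrightarrow> S t = {i}"
    \<comment> \<open>epoch l: MLE and basic optimal UCB-LP solution, computed if the epoch is reached\<close>
    and mle: "\<forall>l\<in>{1..q_par L N K}.
                 \<not> exhausted_before K T a c I (Suc (epoch_end T \<tau> (q_par L N K) (l - 1))) \<longrightarrow>
                 (\<forall>\<theta>'. neg_loglik S I (epoch_end T \<tau> (q_par L N K) (l - 1)) (\<theta> l)
                        \<le> neg_loglik S I (epoch_end T \<tau> (q_par L N K) (l - 1)) \<theta>')"
    and lp: "\<forall>l\<in>{1..q_par L N K}.
                 \<not> exhausted_before K T a c I (Suc (epoch_end T \<tau> (q_par L N K) (l - 1))) \<longrightarrow>
                 ucb_basic_opt N K r a c
                   (omega_par N K T \<tau> (q_par L N K) c (Psi_par N K T (q_par L N K) R \<delta>) \<delta>)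
                   (\<lambda>i. exp (\<theta> l i))
                   (\<lambda>i. eps_par N (Psi_par N K T (q_par L N K) R \<delta>)
                          (offer_count S (epoch_end T \<tau> (q_par L N K) (l - 1)) i))
                   (y l)"
    \<comment> \<open>in epoch l every offered assortment is drawn from the support of y_l\<close>
    and draws: "\<forall>l\<in>{1..q_par L N K}. \<forall>t\<in>{1..T}.
                 epoch_end T \<tau> (q_par L N K) (l - 1) < t \<and> t \<le> epoch_end T \<tau> (q_par L N K) l
                 \<and> \<not> exhausted_before K T a c I t \<longrightarrow> y l (S t) > 0"
    \<comment> \<open>in epoch l each drawn assortment is offered in one block of consecutive periods\<close>
    and blocks: "\<forall>l\<in>{1..q_par L N K}. \<forall>t1 t2 t3.
                 epoch_end T \<tau> (q_par L N K) (l - 1) < t1 \<and> t1 < t2 \<and> t2 < t3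
                 \<and> t3 \<le> epoch_end T \<tau> (q_par L N K) l \<and> t3 \<le> T
                 \<and> \<not> exhausted_before K T a c I t3 \<and> S t1 = S t3 \<longrightarrow> S t2 = S t1"
  shows "num_switches T S \<le> L"
proof -
  let ?q = "q_par L N K"
  interpret epoch_schedule N K T "\<tau> div N" ?q "epoch_end T \<tau> ?q" a c S I y
  proof
    show "epoch_end T \<tau> ?q 0 = N * (\<tau> div N)"
      using \<tau>_mult by (simp add: epoch_end_def)
    show "{A. 0 < y l A} \<subseteq> Pow {1..N}" "card {A. 0 < y l A} \<le> K + 1"
      if "l \<in> {1..?q}" "\<not> exhausted_before K T a c I (Suc (epoch_end T \<tau> ?q (l - 1)))" for l
      using ucb_basic_opt_support[OF lp[rule_format, OF that]] by auto
  qed (fact N_pos, use a_range in simp, use a0 in simp, use choice in blast,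
      use stopped in blast, use warm in blast, use draws in blast, use blocks in blast)
  have "num_switches T S \<le> N + ?q * (K + 1)" by (rule num_switches_le)
  moreover have "?q * (K + 1) \<le> L - N"
    unfolding q_par_def by (rule div_times_less_eq_dividend)
  moreover have "N < L"
    using q_pos unfolding q_par_def by (cases "L - N = 0") auto
  ultimately show ?thesis by linarith
qed

end
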